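(* There is a one-to-one correspondence between isomorphism classes of complex unitary 3-Leibniz algebras $\mathbb{V}$ and isomorphism classes of pairs $(\mathfrak{g},\mathbb{V})$ where $\mathfrak{g}$ is a metric real Lie algebra and $\mathbb{V}$ is a faithful complex unitary representation of $\mathfrak{g}$.
   Context: All vector spaces are finite-dimensional. A hermitian form $h$ on a complex vector space is complex linear in the first argument, antilinear in the second, satisfies $h(u,v)=\overline{h(v,u)}$, and is assumed nondegenerate. A complex unitary 3-Leibniz algebra is a complex vector space $\mathbb{V}$ with a hermitian form $h$ and a map $[\![-,-,-]\!]:\mathbb{V}^3\to\mathbb{V}$ which is complex linear in the first and third arguments and complex antilinear in the second, satisfying for all $v,w,x,y,z$: unitarity $h([\![v,w,x]\!],y)=h(x,[\![w,v,y]\!])$; symmetry $h([\![v,w,x]\!],y)=h([\![x,y,v]\!],w)$; fundamental identity $[\![x,y,[\![v,w,z]\!]]\!]=[\![[\![x,y,v]\!],w,z]\!]-[\![v,[\![y,x,w]\!],z]\!]+[\![v,w,[\![x,y,z]\!]]\!]$. An isomorphism of such algebras is a complex linear bijection preserving the bracket and $h$. A metric real Lie algebra is a real Lie algebra with a nondegenerate symmetric ad-invariant bilinear form (any signature). A complex unitary representation of $\mathfrak{g}$ is a Lie algebra homomorphism $\mathfrak{g}\to\mathfrak{u}(\mathbb{V})$, i.e. to complex linear maps with $h(x\cdot u,v)+h(u,x\cdot v)=0$; faithful means injective. Pairs $(\mathfrak{g}_V,\mathbb{V})$, $(\mathfrak{g}_W,\mathbb{W})$ (with $\mathfrak{g}$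 viewed inside $\mathfrak{u}$ via the faithful representation) are isomorphic if there is a complex linear isometry $\varphi:\mathbb{V}\to\mathbb{W}$ with $\mathfrak{g}_W=\varphi\circ\mathfrak{g}_V\circ\varphi^{-1}$ and $x\mapsto\varphi x\varphi^{-1}$ an isometry of metric Lie algebras. *)

theory Defs
  imports "HOL-Analysis.Analysis"
begin

text \<open>The complex vector space V is modelled as complex^'n (finite 'n), complex scalar
multiplication is (*s); complex linear endomorphisms of V are matrices complex^'n^'n acting by *v.\<close>

type_synonym 'n cvec = "complex^'n"
type_synonym 'n cmat = "complex^'n^'n"

definition herm_form :: "('n::finite cvec \<Rightarrow> 'n cvec \<Rightarrow> complex) \<Rightarrow> bool" where
  "herm_form h \<longleftrightarrow>
     (\<forall>u u' v. h (u + u') v = h u v + h u' v) \<and>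
     (\<forall>c u v. h (c *s u) v = c * h u v) \<and>
     (\<forall>u v. h u v = cnj (h v u)) \<and>
     (\<forall>u. (\<forall>v. h u v = 0) \<longrightarrow> u = 0)"

definition unitary_3leibniz ::
  "('n::finite cvec \<Rightarrow> 'n cvec \<Rightarrow> complex) \<Rightarrow> ('n cvec \<Rightarrow> 'n cvec \<Rightarrow> 'n cvec \<Rightarrow> 'n cvec) \<Rightarrow> bool" where
  "unitary_3leibniz h br \<longleftrightarrow> herm_form h \<and>
     (\<forall>x x' y z. br (x + x') y z = br x y z + br x' y z) \<and>
     (\<forall>c x y z. br (c *s x) y z = c *s br x y z) \<and>
     (\<forall>x y y' z. br x (y + y') z = br x y z + br x y' z) \<and>
     (\<forall>c x y z. br x (c *s y) z = cnj c *s br x y z) \<and>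
     (\<forall>x y z z'. br x y (z + z') = br x y z + br x y z') \<and>
     (\<forall>c x y z. br x y (c *s z) = c *s br x y z) \<and>
     (\<forall>v w x y. h (br v w x) y = h x (br w v y)) \<and>
     (\<forall>v w x y. h (br v w x) y = h (br x y v) w) \<and>
     (\<forall>x y v w z. br x y (br v w z) =
        br (br x y v) w z - br v (br y x w) z + br v w (br x y z))"

definition skew_wrt :: "('n::finite cvec \<Rightarrow> 'n cvec \<Rightarrow> complex) \<Rightarrow> 'n cmat \<Rightarrow> bool" where
  "skew_wrt h X \<longleftrightarrow> (\<forall>u v. h (X *v u) v + h u (X *v v) = 0)"

definition commutator :: "'n::finite cmat \<Rightarrow> 'n cmat \<Rightarrow> 'n cmat" where
  "commutator X Y = X ** Y - Y ** X"

text \<open>A pair (g, V): V = (complex^'n, h), g a real Lie subalgebra G of u(V,h) (the image of the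
faithful representation), with a nondegenerate symmetric ad-invariant real bilinear form Bf on G.\<close>
definition metric_lie_pair ::
  "('n::finite cvec \<Rightarrow> 'n cvec \<Rightarrow> complex) \<Rightarrow> 'n cmat set \<Rightarrow> ('n cmat \<Rightarrow> 'n cmat \<Rightarrow> real) \<Rightarrow> bool" where
  "metric_lie_pair h G Bf \<longleftrightarrow> herm_form h \<and>
     0 \<in> G \<and>
     (\<forall>X\<in>G. \<forall>Y\<in>G. X + Y \<in> G) \<and>
     (\<forall>r::real. \<forall>X\<in>G. r *\<^sub>R X \<in> G) \<and>
     (\<forall>X\<in>G. skew_wrt h X) \<and>
     (\<forall>X\<in>G. \<forall>Y\<in>G. commutator X Y \<in> G) \<and>
     (\<forall>X\<in>G. \<forall>Y\<in>G. Bf X Y = Bf Y X) \<and>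
     (\<forall>X\<in>G. \<forall>X'\<in>G. \<forall>Y\<in>G. Bf (X + X') Y = Bf X Y + Bf X' Y) \<and>
     (\<forall>r::real. \<forall>X\<in>G. \<forall>Y\<in>G. Bf (r *\<^sub>R X) Y = r * Bf X Y) \<and>
     (\<forall>X\<in>G. (\<forall>Y\<in>G. Bf X Y = 0) \<longrightarrow> X = 0) \<and>
     (\<forall>X\<in>G. \<forall>Y\<in>G. \<forall>Z\<in>G. Bf (commutator X Y) Z = - Bf Y (commutator X Z))"

text \<open>The bracket associated to a pair: [[x,y,z]] = D(x,y) z, where D(x,y) = A + i C in the
complexification of g is defined by (D(x,y), X) = h(X x, y) for X in g, i.e.
Bf A X = Re h(Xx,y), Bf C X = Im h(Xx,y).\<close>
definition induced_bracket ::
  "('n::finite cvec \<Rightarrow> 'n cvec \<Rightarrow> complex) \<Rightarrow> 'n cmat set \<Rightarrow> ('n cmat \<Rightarrow> 'n cmat \<Rightarrow> real)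
   \<Rightarrow> ('n cvec \<Rightarrow> 'n cvec \<Rightarrow> 'n cvec \<Rightarrow> 'n cvec) \<Rightarrow> bool" where
  "induced_bracket h G Bf br \<longleftrightarrow>
     (\<forall>x y. \<exists>A\<in>G. \<exists>C\<in>G.
        (\<forall>X\<in>G. Bf A X = Re (h (X *v x) y) \<and> Bf C X = Im (h (X *v x) y)) \<and>
        (\<forall>z. br x y z = A *v z + \<i> *s (C *v z)))"

definition leibniz_iso ::
  "'n::finite cmat \<Rightarrow> ('n cvec \<Rightarrow> 'n cvec \<Rightarrow> complex) \<Rightarrow> ('n cvec \<Rightarrow> 'n cvec \<Rightarrow> 'n cvec \<Rightarrow> 'n cvec)
   \<Rightarrow> ('n cvec \<Rightarrow> 'n cvec \<Rightarrow> complex) \<Rightarrow> ('n cvec \<Rightarrow> 'n cvec \<Rightarrow> 'n cvec \<Rightarrow> 'n cvec) \<Rightarrow> bool" where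
  "leibniz_iso P h br h' br' \<longleftrightarrow> invertible P \<and>
     (\<forall>u v. h' (P *v u) (P *v v) = h u v) \<and>
     (\<forall>u v w. P *v br u v w = br' (P *v u) (P *v v) (P *v w))"

definition pair_iso ::
  "'n::finite cmat \<Rightarrow> ('n cvec \<Rightarrow> 'n cvec \<Rightarrow> complex) \<Rightarrow> 'n cmat set \<Rightarrow> ('n cmat \<Rightarrow> 'n cmat \<Rightarrow> real)
   \<Rightarrow> ('n cvec \<Rightarrow> 'n cvec \<Rightarrow> complex) \<Rightarrow> 'n cmat set \<Rightarrow> ('n cmat \<Rightarrow> 'n cmat \<Rightarrow> real) \<Rightarrow> bool" where
  "pair_iso P h G Bf h' G' Bf' \<longleftrightarrow> invertible P \<and>
     (\<forall>u v. h' (P *v u) (P *v v) = h u v) \<and>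
     G' = (\<lambda>X. P ** X ** matrix_inv P) ` G \<and>
     (\<forall>X\<in>G. \<forall>Y\<in>G. Bf' (P ** X ** matrix_inv P) (P ** Y ** matrix_inv P) = Bf X Y)"

end

theory Submission
  imports Defs
begin

text \<open>For a metric Lie algebra G inside u(V), nondegeneracy of its form represents the real
  functionals X \<mapsto> Re h (X x) y and X \<mapsto> Im h (X x) y by elements of G; together they form
  D(x,y) in the complexification of G, and the bracket is D(x,y) z. Skewness of G and symmetry
  of the form give unitarity and symmetry of the bracket; ad-invariance makes G act on the D(x,y)
  by derivations, which is the fundamental identity.

  Conversely, the skew-adjoint parts of the operators [[x,y,-]] of a unitary 3-Leibniz algebra
  are closed under commutators by the fundamental identity, and pairing D(x,y) with X by
  Re h (X x) y is a well-defined symmetric invariant form on their span, because the symmetry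
  axiom makes this expression symmetric. As the D(x,y) span G, an isometry intertwines two
  brackets exactly when it conjugates the D's, i.e. when it is an isomorphism of pairs.\<close>

lemma zero_matrix_vector_mult [simp]: "(0::'a::semiring_1^'n::finite^'m) *v x = 0"
  by (simp add: vec_eq_iff matrix_vector_mult_def)

lemma linear_Re: "linear Re" and linear_Im: "linear Im"
  by (simp_all add: bounded_linear.linear bounded_linear_Re bounded_linear_Im)

lemma linear_Re_Im: "f = Re \<or> f = Im \<Longrightarrow> linear f"
  using linear_Re linear_Im by blast

lemma scaleR_matrix_vector_mult: "((r::real) *\<^sub>R (M::'n::finite cmat)) *v z = of_real r *s (M *v z)"
proof -
  have "r *\<^sub>R a = of_real r * a" for a :: complex
    by (simp add: scaleR_conv_of_real)
  then show ?thesis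
    by (simp add: vec_eq_iff matrix_vector_mult_def sum_distrib_left mult.assoc)
qed

lemma neg_matrix_vector_mult: "(- (M::'n::finite cmat)) *v z = - (M *v z)"
  using scaleR_matrix_vector_mult[of "-1" M z] by (simp add: vec_eq_iff)

lemma commutator_vector_mult: "commutator X Y *v z = X *v (Y *v z) - Y *v (X *v z)"
  by (simp add: commutator_def matrix_vector_mult_diff_rdistrib matrix_vector_mul_assoc)

lemma commutator_add_left: "commutator (X + Y) Z = commutator X Z + commutator Y Z"
  by (simp add: matrix_eq commutator_vector_mult matrix_vector_mult_add_rdistrib vec.add)

lemma commutator_add_right: "commutator X (Y + Z) = commutator X Y + commutator X Z"
  by (simp add: matrix_eq commutator_vector_mult matrix_vector_mult_add_rdistrib vec.add)

lemma commutator_zero_left [simp]: "commutator 0 X = 0"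
  and commutator_zero_right [simp]: "commutator X 0 = 0"
  by (simp_all add: commutator_def)

lemma invertible_matrix_inv:
  fixes P :: "'a::comm_ring_1^'n::finite^'n"
  assumes "invertible P"
  shows "P ** matrix_inv P = mat 1" and "matrix_inv P ** P = mat 1"
proof -
  have "\<exists>P'. P ** P' = mat 1 \<and> P' ** P = mat 1"
    using assms unfolding invertible_def by blast
  then have "P ** matrix_inv P = mat 1 \<and> matrix_inv P ** P = mat 1"
    unfolding matrix_inv_def by (rule someI_ex)
  then show "P ** matrix_inv P = mat 1" and "matrix_inv P ** P = mat 1"
    by auto
qed

lemma matrix_inv_vector_mult_cancel:
  fixes P :: "'a::comm_ring_1^'n::finite^'n"
  assumes "invertible P"
  shows "P *v (matrix_inv P *v w) = w"
  using invertible_matrix_inv[OF assms] by (simp add: matrix_vector_mul_assoc)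

lemma conjugate_matrix_vector_mult:
  fixes P :: "'a::comm_ring_1^'n::finite^'n"
  assumes "invertible P"
  shows "(P ** X ** matrix_inv P) *v (P *v w) = P *v (X *v w)"
proof -
  have "matrix_inv P *v (P *v w) = w"
    using invertible_matrix_inv[OF assms] by (simp add: matrix_vector_mul_assoc)
  then show ?thesis
    by (simp add: matrix_vector_mul_assoc[symmetric])
qed

lemma linear_matrix_sandwich: "linear (\<lambda>X::'n::finite cmat. (P::'n cmat) ** X ** (Q::'n cmat))"
proof (rule linearI)
  fix X Y :: "'n cmat" and r :: real
  show "P ** (X + Y) ** Q = P ** X ** Q + P ** Y ** Q"
    by (simp add: matrix_eq matrix_vector_mult_add_rdistrib matrix_vector_mul_assoc[symmetric] vec.add)
  show "P ** (r *\<^sub>R X) ** Q = r *\<^sub>R (P ** X ** Q)"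
    by (simp add: matrix_eq scaleR_matrix_vector_mult matrix_vector_mul_assoc[symmetric] vec.scale)
qed

lemma skew_wrtD: "skew_wrt h X \<Longrightarrow> h (X *v u) v = - h u (X *v v)"
  unfolding skew_wrt_def by (simp add: eq_neg_iff_add_eq_0)

section \<open>Hermitian forms\<close>

locale hermitian_form =
  fixes h :: "'n::finite cvec \<Rightarrow> 'n cvec \<Rightarrow> complex"
  assumes herm_add_left: "h (u + u') v = h u v + h u' v"
    and herm_scale_left: "h (c *s u) v = c * h u v"
    and herm_cnj: "h u v = cnj (h v u)"
    and herm_nondegenerate: "(\<And>v. h u v = 0) \<Longrightarrow> u = 0"
begin

lemma herm_add_right: "h u (v + v') = h u v + h u v'"
  by (metis herm_cnj herm_add_left complex_cnj_add)

lemma herm_scale_right: "h u (c *s v) = cnj c * h u v"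
  by (metis herm_cnj herm_scale_left complex_cnj_mult)

lemma herm_zero_left [simp]: "h 0 v = 0"
  using herm_scale_left[of 0 0 v] by simp

lemma herm_zero_right [simp]: "h u 0 = 0"
  using herm_scale_right[of u 0 0] by simp

lemma herm_minus_left: "h (- u) v = - h u v"
  using herm_scale_left[of "-1" u v] by simp

lemma herm_minus_right: "h u (- v) = - h u v"
  using herm_scale_right[of u "-1" v] by simp

lemma herm_diff_left: "h (u - u') v = h u v - h u' v"
  using herm_add_left[of u "- u'" v] by (simp add: herm_minus_left)

lemma herm_diff_right: "h u (v - v') = h u v - h u v'"
  using herm_add_right[of u v "- v'"] by (simp add: herm_minus_right)

lemmas herm_simps = herm_add_left herm_add_right herm_diff_left herm_diff_right
  herm_minus_left herm_minus_right herm_scale_left herm_scale_right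

lemma matrix_eq_0_if_herm_eq_0:
  assumes "\<And>u v. h (M *v u) v = 0"
  shows "M = 0"
proof -
  have "M *v u = 0" for u
    using herm_nondegenerate assms by blast
  then show ?thesis
    by (simp add: matrix_eq)
qed

end

lemma herm_form_iff_hermitian_form: "herm_form h \<longleftrightarrow> hermitian_form h"
  unfolding herm_form_def hermitian_form_def by blast

lemma (in hermitian_form) skew_wrt_diff:
  assumes "skew_wrt h M" and "skew_wrt h N"
  shows "skew_wrt h (M - N)"
  using assms by (simp add: skew_wrt_def matrix_vector_mult_diff_rdistrib herm_simps skew_wrtD)

text \<open>The sum u(V) + i u(V) is direct: i N is hermitian, so M = - i N is both skew and hermitian.\<close>
lemma (in hermitian_form) skew_wrt_complex_combination_eq_0:
  assumes M: "skew_wrt h M" and N: "skew_wrt h N"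
    and eq: "\<And>w. M *v w + \<i> *s (N *v w) = 0"
  shows "M = 0 \<and> N = 0"
proof -
  have M_eq: "M *v w = - \<i> *s (N *v w)" for w
    using eq[of w] by (simp add: eq_neg_iff_add_eq_0)
  have "h (M *v u) v = h u (M *v v)" for u v
    unfolding M_eq by (simp add: herm_simps skew_wrtD[OF N])
  then have "h (M *v u) v = 0" for u v
    using skew_wrtD[OF M, of u v] by simp
  then have "M = 0"
    by (rule matrix_eq_0_if_herm_eq_0)
  moreover have "N = 0"
    using \<open>M = 0\<close> M_eq by (simp add: matrix_eq)
  ultimately show ?thesis ..
qed

section \<open>Nondegenerate symmetric forms on a subspace\<close>

lemma linear_on_inj_on_imp_surj_on:
  fixes f :: "'a::euclidean_space \<Rightarrow> 'a"
  assumes S: "subspace S" and f_S: "f ` S \<subseteq> S" and inj: "inj_on f S"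
    and add: "\<And>x y. x \<in> S \<Longrightarrow> y \<in> S \<Longrightarrow> f (x + y) = f x + f y"
    and scale: "\<And>r x. x \<in> S \<Longrightarrow> f (r *\<^sub>R x) = r *\<^sub>R f x"
  shows "f ` S = S"
proof -
  obtain B where B: "B \<subseteq> S" "independent B" "S \<subseteq> span B"
    by (metis basis_exists)
  obtain g where g: "linear g" "\<And>x. x \<in> B \<Longrightarrow> g x = f x"
    using linear_independent_extend[OF B(2)] by metis
  have "f 0 = 0"
    using scale[of 0 0] subspace_0[OF S] by simp
  then have "subspace {x \<in> S. g x = f x}"
    using S add scale by (auto simp: subspace_def linear_0[OF g(1)] linear_add[OF g(1)]
        linear_scale[OF g(1)])
  then have "span B \<subseteq> {x \<in> S. g x = f x}"
    using B(1) g(2) by (intro span_minimal) auto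
  then have g_f: "g x = f x" if "x \<in> S" for x
    using B(3) that by blast
  then have "g ` S = f ` S" and "inj_on g (span S)"
    using inj S by (auto simp: inj_on_def span_eq_iff[THEN iffD2])
  then have "dim (f ` S) = dim S"
    using dim_image_eq[OF g(1)] by metis
  moreover have "subspace (f ` S)"
    using linear_subspace_image[OF g(1) S] \<open>g ` S = f ` S\<close> by simp
  ultimately show ?thesis
    using subspace_dim_equal[OF _ S f_S] by simp
qed

lemma independent_coefficients_eq:
  fixes T :: "'a::euclidean_space set"
  assumes "independent T" and "(\<Sum>c\<in>T. a c *\<^sub>R c) = (\<Sum>c\<in>T. b c *\<^sub>R c)"
  shows "\<forall>c\<in>T. a c = b c"
proof -
  have "(\<Sum>c\<in>T. (a c - b c) *\<^sub>R c) = 0"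
    using assms(2) by (simp add: scaleR_diff_left sum_subtractf)
  then show ?thesis
    using assms(1) unfolding independent_explicit by auto
qed

locale nondegenerate_form =
  fixes G :: "'a::euclidean_space set" and B :: "'a \<Rightarrow> 'a \<Rightarrow> real"
  assumes subspace: "subspace G"
    and form_sym: "X \<in> G \<Longrightarrow> Y \<in> G \<Longrightarrow> B X Y = B Y X"
    and form_add_left: "X \<in> G \<Longrightarrow> X' \<in> G \<Longrightarrow> Y \<in> G \<Longrightarrow> B (X + X') Y = B X Y + B X' Y"
    and form_scale_left: "X \<in> G \<Longrightarrow> Y \<in> G \<Longrightarrow> B (r *\<^sub>R X) Y = r * B X Y"
    and form_nondegenerate: "X \<in> G \<Longrightarrow> (\<And>Y. Y \<in> G \<Longrightarrow> B X Y = 0) \<Longrightarrow> X = 0"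
begin

lemma add_mem: "X \<in> G \<Longrightarrow> Y \<in> G \<Longrightarrow> X + Y \<in> G"
  and diff_mem: "X \<in> G \<Longrightarrow> Y \<in> G \<Longrightarrow> X - Y \<in> G"
  and neg_mem: "X \<in> G \<Longrightarrow> - X \<in> G"
  and scale_mem: "X \<in> G \<Longrightarrow> r *\<^sub>R X \<in> G"
  by (simp_all add: subspace subspace_add subspace_diff subspace_neg subspace_scale)

lemma form_add_right: "X \<in> G \<Longrightarrow> Y \<in> G \<Longrightarrow> Y' \<in> G \<Longrightarrow> B X (Y + Y') = B X Y + B X Y'"
  using form_add_left form_sym subspace_add[OF subspace] by metis

lemma form_scale_right: "X \<in> G \<Longrightarrow> Y \<in> G \<Longrightarrow> B X (r *\<^sub>R Y) = r * B X Y"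
  using form_scale_left form_sym subspace_scale[OF subspace] by metis

lemma form_zero_right: "X \<in> G \<Longrightarrow> B X 0 = 0"
  using form_scale_right[of X 0 0] subspace_0[OF subspace] by simp

lemma form_neg_left: "X \<in> G \<Longrightarrow> Y \<in> G \<Longrightarrow> B (- X) Y = - B X Y"
  using form_scale_left[of X Y "-1"] by simp

lemma form_diff_left: "X \<in> G \<Longrightarrow> X' \<in> G \<Longrightarrow> Y \<in> G \<Longrightarrow> B (X - X') Y = B X Y - B X' Y"
  using form_add_left[of X "- X'" Y] form_neg_left[of X' Y] neg_mem by simp

lemma form_eqI:
  assumes "A \<in> G" and "A' \<in> G" and "\<And>X. X \<in> G \<Longrightarrow> B A X = B A' X"
  shows "A = A'"
  using form_nondegenerate[of "A - A'"] assms subspace_diff[OF subspace] by (simp add: form_diff_left)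

lemma form_eq_on_span:
  assumes T: "T \<subseteq> G" and A: "A \<in> G" and eq: "\<And>c. c \<in> T \<Longrightarrow> B A c = \<phi> c"
    and \<phi>_add: "\<And>X Y. X \<in> G \<Longrightarrow> Y \<in> G \<Longrightarrow> \<phi> (X + Y) = \<phi> X + \<phi> Y"
    and \<phi>_scale: "\<And>r X. X \<in> G \<Longrightarrow> \<phi> (r *\<^sub>R X) = r * \<phi> X"
    and Y: "Y \<in> span T"
  shows "B A Y = \<phi> Y"
proof -
  have "\<phi> 0 = 0"
    using \<phi>_scale[of 0 0] subspace_0[OF subspace] by simp
  then have "subspace {Y \<in> G. B A Y = \<phi> Y}"
    using subspace \<phi>_add \<phi>_scale form_add_right[OF A] form_scale_right[OF A] form_zero_right[OF A]
    by (auto simp: subspace_def)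
  then have "span T \<subseteq> {Y \<in> G. B A Y = \<phi> Y}"
    using T eq by (intro span_minimal) auto
  then show ?thesis
    using Y by blast
qed

text \<open>Riesz representation: for a basis T of G the map sending A to the sum of the B A c \<cdot> c
  over c \<in> T is injective on G, hence onto G.\<close>
lemma riesz_exists:
  assumes \<phi>_add: "\<And>X Y. X \<in> G \<Longrightarrow> Y \<in> G \<Longrightarrow> \<phi> (X + Y) = \<phi> X + \<phi> Y"
    and \<phi>_scale: "\<And>r X. X \<in> G \<Longrightarrow> \<phi> (r *\<^sub>R X) = r * \<phi> X"
  shows "\<exists>A\<in>G. \<forall>X\<in>G. B A X = \<phi> X"
proof -
  obtain T where T: "T \<subseteq> G" "independent T" "G \<subseteq> span T"
    by (metis basis_exists)
  have span_T: "span T = G"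
    using span_subspace[OF T(1,3) subspace] .
  define J where "J A = (\<Sum>c\<in>T. B A c *\<^sub>R c)" for A
  have "J ` G = G"
  proof (rule linear_on_inj_on_imp_surj_on[OF subspace])
    show "J ` G \<subseteq> G"
      unfolding J_def span_T[symmetric] by (auto intro: span_sum span_scale span_base)
    show "inj_on J G"
    proof (rule inj_onI)
      fix A A' assume A: "A \<in> G" and A': "A' \<in> G" and "J A = J A'"
      then have "\<forall>c\<in>T. B A c = B A' c"
        using independent_coefficients_eq[OF T(2)] unfolding J_def by blast
      then have "B A Y = B A' Y" if "Y \<in> G" for Y
        using form_eq_on_span[OF T(1) A, of "B A'"] form_add_right[OF A'] form_scale_right[OF A']
          that span_T by blast
      then show "A = A'"
        using form_eqI[OF A A'] by blast
    qed
    show "J (X + Y) = J X + J Y" if "X \<in> G" "Y \<in> G" for X Y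
      using that T(1) unfolding J_def
      by (simp add: subset_iff form_add_left scaleR_add_left sum.distrib[symmetric])
    show "J (r *\<^sub>R X) = r *\<^sub>R J X" if "X \<in> G" for r X
      using that T(1) unfolding J_def by (simp add: subset_iff form_scale_left scaleR_sum_right)
  qed
  moreover have "(\<Sum>c\<in>T. \<phi> c *\<^sub>R c) \<in> G"
    unfolding span_T[symmetric] by (auto intro: span_sum span_scale span_base)
  ultimately obtain A where A: "A \<in> G" "J A = (\<Sum>c\<in>T. \<phi> c *\<^sub>R c)"
    by (metis imageE)
  then have "\<forall>c\<in>T. B A c = \<phi> c"
    using independent_coefficients_eq[OF T(2)] unfolding J_def by blast
  then show ?thesis
    using A(1) T(1) span_T form_eq_on_span[of T A \<phi>] \<phi>_add \<phi>_scale by blast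
qed

definition riesz :: "('a \<Rightarrow> real) \<Rightarrow> 'a" where
  "riesz \<phi> = (THE A. A \<in> G \<and> (\<forall>X\<in>G. B A X = \<phi> X))"

lemma riesz_eqI:
  assumes "A \<in> G" and "\<And>X. X \<in> G \<Longrightarrow> B A X = \<phi> X"
  shows "riesz \<phi> = A"
  unfolding riesz_def
proof (rule the_equality)
  show "A \<in> G \<and> (\<forall>X\<in>G. B A X = \<phi> X)"
    using assms by blast
  show "A' = A" if "A' \<in> G \<and> (\<forall>X\<in>G. B A' X = \<phi> X)" for A'
    using that assms by (auto intro: form_eqI)
qed

lemma riesz:
  assumes "\<And>X Y. X \<in> G \<Longrightarrow> Y \<in> G \<Longrightarrow> \<phi> (X + Y) = \<phi> X + \<phi> Y"
    and "\<And>r X. X \<in> G \<Longrightarrow> \<phi> (r *\<^sub>R X) = r * \<phi> X"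
  shows riesz_mem: "riesz \<phi> \<in> G" and riesz_form: "X \<in> G \<Longrightarrow> B (riesz \<phi>) X = \<phi> X"
proof -
  obtain A where "A \<in> G" and "\<forall>X\<in>G. B A X = \<phi> X"
    using riesz_exists[OF assms] by blast
  then show "riesz \<phi> \<in> G" and "X \<in> G \<Longrightarrow> B (riesz \<phi>) X = \<phi> X"
    using riesz_eqI by auto
qed

lemma dual_basis_vector:
  assumes C: "C \<subseteq> G" "independent C" "G \<subseteq> span C" and b: "b \<in> C"
  obtains X where "X \<in> G" and "\<And>c. c \<in> C \<Longrightarrow> B X c = (if c = b then 1 else 0)"
proof -
  let ?\<phi> = "\<lambda>X. real_vector.representation C X b"
  have span_C: "X \<in> G \<Longrightarrow> X \<in> span C" for X
    using C(3) by blast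
  have "?\<phi> (X + Y) = ?\<phi> X + ?\<phi> Y" if "X \<in> G" "Y \<in> G" for X Y
    using real_vector.representation_add[OF C(2) span_C span_C] that by simp
  moreover have "?\<phi> (r *\<^sub>R X) = r * ?\<phi> X" if "X \<in> G" for r X
    using real_vector.representation_scale[OF C(2) span_C] that by simp
  ultimately have mem: "riesz ?\<phi> \<in> G" and form: "\<And>Y. Y \<in> G \<Longrightarrow> B (riesz ?\<phi>) Y = ?\<phi> Y"
    using riesz[of ?\<phi>] by auto
  show ?thesis
  proof (rule that[OF mem])
    fix c assume "c \<in> C"
    then show "B (riesz ?\<phi>) c = (if c = b then 1 else 0)"
      using form[of c] real_vector.representation_basis[OF C(2)] C(1) by auto
  qed
qed

text \<open>If a basis vector b of G lay outside span T, its dual basis vector would be orthogonal to T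
  but not to b.\<close>
lemma span_eq_if_orthogonal_eq_0:
  assumes T: "T \<subseteq> G" and orth: "\<And>X. X \<in> G \<Longrightarrow> (\<And>t. t \<in> T \<Longrightarrow> B X t = 0) \<Longrightarrow> X = 0"
  shows "span T = G"
proof -
  obtain S where S: "S \<subseteq> span T" "independent S" "span T \<subseteq> span S"
    by (metis basis_exists)
  have "S \<subseteq> G"
    using S(1) span_minimal[OF T subspace] by blast
  then obtain C where C: "S \<subseteq> C" "C \<subseteq> G" "independent C" "G \<subseteq> span C"
    using maximal_independent_subset_extend[OF _ S(2)] by metis
  have "C \<subseteq> S"
  proof
    fix b assume b: "b \<in> C"
    obtain X where X: "X \<in> G" and X_C: "\<And>c. c \<in> C \<Longrightarrow> B X c = (if c = b then 1 else 0)"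
      using dual_basis_vector[OF C(2-4) b] by blast
    show "b \<in> S"
    proof (rule ccontr)
      assume "b \<notin> S"
      then have "B X c = 0" if "c \<in> S" for c
        using that X_C C(1) by auto
      then have "B X Y = 0" if "Y \<in> span S" for Y
        using form_eq_on_span[OF \<open>S \<subseteq> G\<close> X, of "\<lambda>_. 0"] that by simp
      then have "X = 0"
        using orth[OF X] S(3) span_base by blast
      then show False
        using X_C[OF b] form_sym[of 0 b] form_zero_right[of b] subspace_0[OF subspace] b C(2)
        by auto
    qed
  qed
  then have "G \<subseteq> span S"
    using C(4) span_mono[of C S] by blast
  also have "span S \<subseteq> span T"
    using S(1) by (simp add: span_minimal)
  finally show ?thesis
    using span_subspace[OF T _ subspace] by blast
qed

end

section \<open>The bracket of a metric Lie pair\<close>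

locale unitary_leibniz = hermitian_form h
  for h :: "'n::finite cvec \<Rightarrow> 'n cvec \<Rightarrow> complex" +
  fixes br :: "'n cvec \<Rightarrow> 'n cvec \<Rightarrow> 'n cvec \<Rightarrow> 'n cvec"
  assumes br_add_left: "br (x + x') y z = br x y z + br x' y z"
    and br_scale_left: "br (c *s x) y z = c *s br x y z"
    and br_add_middle: "br x (y + y') z = br x y z + br x y' z"
    and br_scale_middle: "\<And>c x y z. br x (c *s y) z = cnj c *s br x y z"
    and br_add_right: "br x y (z + z') = br x y z + br x y z'"
    and br_scale_right: "\<And>c x y z. br x y (c *s z) = c *s br x y z"
    and unitarity: "h (br v w x) y = h x (br w v y)"
    and symmetry: "h (br v w x) y = h (br x y v) w"
    and fundamental_identity:
      "br x y (br v w z) = br (br x y v) w z - br v (br y x w) z + br v w (br x y z)"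

lemma unitary_3leibniz_iff_unitary_leibniz: "unitary_3leibniz h br \<longleftrightarrow> unitary_leibniz h br"
  unfolding unitary_3leibniz_def unitary_leibniz_def unitary_leibniz_axioms_def
    herm_form_iff_hermitian_form
  by (simp only: conj_assoc)

locale lie_pair =
  fixes h :: "'n::finite cvec \<Rightarrow> 'n cvec \<Rightarrow> complex" and G :: "'n cmat set"
    and Bf :: "'n cmat \<Rightarrow> 'n cmat \<Rightarrow> real"
  assumes metric_lie_pair: "metric_lie_pair h G Bf"

sublocale lie_pair \<subseteq> hermitian_form h
  using metric_lie_pair by (simp add: metric_lie_pair_def herm_form_iff_hermitian_form)

sublocale lie_pair \<subseteq> nondegenerate_form G Bf
  using metric_lie_pair unfolding metric_lie_pair_def nondegenerate_form_def subspace_def by blast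

context lie_pair
begin

lemma skew: "X \<in> G \<Longrightarrow> skew_wrt h X"
  using metric_lie_pair unfolding metric_lie_pair_def by blast

lemma commutator_mem: "X \<in> G \<Longrightarrow> Y \<in> G \<Longrightarrow> commutator X Y \<in> G"
  using metric_lie_pair unfolding metric_lie_pair_def by blast

lemma invariant: "X \<in> G \<Longrightarrow> Y \<in> G \<Longrightarrow> Z \<in> G \<Longrightarrow> Bf (commutator X Y) Z = - Bf Y (commutator X Z)"
  using metric_lie_pair unfolding metric_lie_pair_def by blast

text \<open>The paper's D(x,y), the element of the complexification of G paired with X by h (X x) y,
  is moment Re x y + \<i> moment Im x y.\<close>
definition moment :: "(complex \<Rightarrow> real) \<Rightarrow> 'n cvec \<Rightarrow> 'n cvec \<Rightarrow> 'n cmat" where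
  "moment f x y = riesz (\<lambda>X. f (h (X *v x) y))"

lemma
  assumes "linear f"
  shows moment_mem: "moment f x y \<in> G"
    and moment_form: "X \<in> G \<Longrightarrow> Bf (moment f x y) X = f (h (X *v x) y)"
proof -
  interpret f: linear f by fact
  have "f (h ((r *\<^sub>R X) *v x) y) = r * f (h (X *v x) y)" for r X
  proof -
    have "f (h ((r *\<^sub>R X) *v x) y) = f (of_real r * h (X *v x) y)"
      by (simp add: scaleR_matrix_vector_mult herm_scale_left)
    also have "\<dots> = r * f (h (X *v x) y)"
      using f.scale[of r "h (X *v x) y"] by (simp add: scaleR_conv_of_real)
    finally show ?thesis .
  qed
  then show "moment f x y \<in> G" and "X \<in> G \<Longrightarrow> Bf (moment f x y) X = f (h (X *v x) y)"
    unfolding moment_def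
    by (auto intro!: riesz simp: matrix_vector_mult_add_rdistrib herm_add_left f.add)
qed

lemma moment_eqI: "M \<in> G \<Longrightarrow> (\<And>X. X \<in> G \<Longrightarrow> Bf M X = f (h (X *v x) y)) \<Longrightarrow> moment f x y = M"
  unfolding moment_def by (rule riesz_eqI)

lemma herm_eq_moments:
  "X \<in> G \<Longrightarrow> h (X *v x) y = Complex (Bf (moment Re x y) X) (Bf (moment Im x y) X)"
  by (simp add: moment_form linear_Re linear_Im complex_eq_iff)

lemma moment_add_left: "linear f \<Longrightarrow> moment f (x + x') y = moment f x y + moment f x' y"
  by (intro moment_eqI)
    (simp_all add: add_mem moment_mem moment_form form_add_left linear_add vec.add herm_add_left)

lemma moment_add_right: "linear f \<Longrightarrow> moment f x (y + y') = moment f x y + moment f x y'"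
  by (intro moment_eqI)
    (simp_all add: add_mem moment_mem moment_form form_add_left linear_add herm_add_right)

lemma moment_Re_scale_left: "moment Re (c *s x) y = Re c *\<^sub>R moment Re x y - Im c *\<^sub>R moment Im x y"
  by (intro moment_eqI)
    (simp_all add: diff_mem scale_mem moment_mem moment_form form_diff_left form_scale_left
      linear_Re linear_Im vec.scale herm_scale_left)

lemma moment_Im_scale_left: "moment Im (c *s x) y = Re c *\<^sub>R moment Im x y + Im c *\<^sub>R moment Re x y"
  by (intro moment_eqI)
    (simp_all add: add_mem scale_mem moment_mem moment_form form_add_left form_scale_left
      linear_Re linear_Im vec.scale herm_scale_left)

lemma moment_Re_scale_right: "moment Re x (c *s y) = Re c *\<^sub>R moment Re x y + Im c *\<^sub>R moment Im x y"
  by (intro moment_eqI)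
    (simp_all add: add_mem scale_mem moment_mem moment_form form_add_left form_scale_left
      linear_Re linear_Im herm_scale_right)

lemma moment_Im_scale_right: "moment Im x (c *s y) = Re c *\<^sub>R moment Im x y - Im c *\<^sub>R moment Re x y"
  by (intro moment_eqI)
    (simp_all add: diff_mem scale_mem moment_mem moment_form form_diff_left form_scale_left
      linear_Re linear_Im herm_scale_right)

lemma herm_skew_swap: "X \<in> G \<Longrightarrow> h (X *v y) x = - cnj (h (X *v x) y)"
  using skew_wrtD[OF skew, of X y x] herm_cnj[of y "X *v x"] by simp

lemma moment_Re_swap: "moment Re y x = - moment Re x y"
  by (intro moment_eqI) (simp_all add: neg_mem moment_mem moment_form linear_Re form_neg_left
      herm_skew_swap[of _ y x])

lemma moment_Im_swap: "moment Im y x = moment Im x y"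
  by (intro moment_eqI) (simp_all add: moment_mem moment_form linear_Im herm_skew_swap[of _ y x])

text \<open>G acts on the moments by derivations: invariance of Bf moves the commutator onto the
  test vector, where skewness of X splits it.\<close>
lemma commutator_moment:
  assumes f: "linear f" and X: "X \<in> G"
  shows "commutator X (moment f x y) = moment f (X *v x) y + moment f x (X *v y)"
proof (rule form_eqI)
  show "commutator X (moment f x y) \<in> G"
    using commutator_mem[OF X moment_mem[OF f]] .
  show "moment f (X *v x) y + moment f x (X *v y) \<in> G"
    by (simp add: add_mem moment_mem f)
next
  fix Y assume Y: "Y \<in> G"
  have "Bf (commutator X (moment f x y)) Y = - Bf (moment f x y) (commutator X Y)"
    by (rule invariant[OF X moment_mem[OF f] Y])
  also have "\<dots> = f (h (Y *v (X *v x)) y) - f (h (X *v (Y *v x)) y)"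
    by (simp add: moment_form f commutator_mem X Y commutator_vector_mult herm_diff_left linear_diff)
  also have "\<dots> = f (h (Y *v (X *v x)) y) + f (h (Y *v x) (X *v y))"
    by (simp add: skew_wrtD[OF skew[OF X]] herm_minus_left f linear_neg)
  also have "\<dots> = Bf (moment f (X *v x) y + moment f x (X *v y)) Y"
    by (simp add: form_add_left moment_mem moment_form f Y)
  finally show "Bf (commutator X (moment f x y)) Y = Bf (moment f (X *v x) y + moment f x (X *v y)) Y" .
qed

definition moments :: "'n cmat set" where
  "moments = {moment f x y | f x y. f = Re \<or> f = Im}"

lemma span_moments: "span moments = G"
proof (rule span_eq_if_orthogonal_eq_0)
  show "moments \<subseteq> G"
    unfolding moments_def using moment_mem linear_Re linear_Im by blast
next
  fix X assume X: "X \<in> G" and orth: "\<And>t. t \<in> moments \<Longrightarrow> Bf X t = 0"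
  have "Bf (moment Re u v) X = 0" and "Bf (moment Im u v) X = 0" for u v
    using orth[of "moment Re u v"] orth[of "moment Im u v"] X form_sym moment_mem linear_Re linear_Im
    unfolding moments_def by auto
  then have "h (X *v u) v = 0" for u v
    using herm_eq_moments[OF X] by (simp add: complex_eq_iff)
  then show "X = 0"
    by (rule matrix_eq_0_if_herm_eq_0)
qed

definition moment_bracket :: "'n cvec \<Rightarrow> 'n cvec \<Rightarrow> 'n cvec \<Rightarrow> 'n cvec" where
  "moment_bracket x y z = moment Re x y *v z + \<i> *s (moment Im x y *v z)"

lemma induced_bracket_iff: "induced_bracket h G Bf br \<longleftrightarrow> br = moment_bracket"
proof
  assume br: "induced_bracket h G Bf br"
  show "br = moment_bracket"
  proof (intro ext)
    fix x y z
    obtain A C where "A \<in> G" "C \<in> G"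
      and "\<forall>X\<in>G. Bf A X = Re (h (X *v x) y) \<and> Bf C X = Im (h (X *v x) y)"
      and "br x y z = A *v z + \<i> *s (C *v z)"
      using br unfolding induced_bracket_def by blast
    then show "br x y z = moment_bracket x y z"
      unfolding moment_bracket_def using moment_eqI[of A Re x y] moment_eqI[of C Im x y] by simp
  qed
next
  assume "br = moment_bracket"
  then show "induced_bracket h G Bf br"
    unfolding induced_bracket_def moment_bracket_def
    using moment_mem moment_form linear_Re linear_Im by blast
qed

lemma moment_bracket_add_left: "moment_bracket (x + x') y z = moment_bracket x y z + moment_bracket x' y z"
  by (simp add: moment_bracket_def moment_add_left linear_Re linear_Im
      vec_eq_iff algebra_simps)

lemma moment_bracket_add_middle: "moment_bracket x (y + y') z = moment_bracket x y z + moment_bracket x y' z"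
  by (simp add: moment_bracket_def moment_add_right linear_Re linear_Im
      vec_eq_iff algebra_simps)

lemma moment_bracket_add_right: "moment_bracket x y (z + z') = moment_bracket x y z + moment_bracket x y z'"
  by (simp add: moment_bracket_def vec.add vec_eq_iff algebra_simps)

lemma moment_bracket_scale_left: "moment_bracket (c *s x) y z = c *s moment_bracket x y z"
  by (simp add: moment_bracket_def moment_Re_scale_left moment_Im_scale_left
      scaleR_matrix_vector_mult vec_eq_iff algebra_simps)
    (simp add: complex_eq_iff algebra_simps)

lemma moment_bracket_scale_middle: "moment_bracket x (c *s y) z = cnj c *s moment_bracket x y z"
  by (simp add: moment_bracket_def moment_Re_scale_right moment_Im_scale_right
      scaleR_matrix_vector_mult vec_eq_iff algebra_simps)
    (simp add: complex_eq_iff algebra_simps)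

lemma moment_bracket_scale_right: "moment_bracket x y (c *s z) = c *s moment_bracket x y z"
  by (simp add: moment_bracket_def vec.scale vec_eq_iff algebra_simps)

lemma herm_moment_bracket:
  "h (moment_bracket x y z) w = h (moment Re x y *v z) w + \<i> * h (moment Im x y *v z) w"
  by (simp add: moment_bracket_def herm_add_left herm_scale_left)

lemma moment_bracket_unitarity: "h (moment_bracket v w x) y = h x (moment_bracket w v y)"
proof -
  have "h (moment_bracket v w x) y = - h x (moment Re v w *v y) - \<i> * h x (moment Im v w *v y)"
    using skew_wrtD[OF skew[OF moment_mem]] by (simp add: herm_moment_bracket linear_Re linear_Im)
  also have "\<dots> = h x (moment_bracket w v y)"
    by (simp add: moment_bracket_def moment_Re_swap[of w v] moment_Im_swap[of w v]
        neg_matrix_vector_mult herm_simps)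
  finally show ?thesis .
qed

text \<open>Both sides are the complex bilinear extension of Bf evaluated at D(x,y) and D(v,w).\<close>
lemma moment_bracket_symmetry: "h (moment_bracket v w x) y = h (moment_bracket x y v) w"
  using form_sym[of "moment f x y" "moment g v w" for f g]
  by (simp add: herm_moment_bracket herm_eq_moments moment_mem linear_Re linear_Im complex_eq_iff)

lemma moment_bracket_derivation:
  assumes X: "X \<in> G"
  shows "X *v moment_bracket v w z
    = moment_bracket v w (X *v z) + moment_bracket (X *v v) w z + moment_bracket v (X *v w) z"
proof -
  have swap: "X *v (M *v z) = M *v (X *v z) + commutator X M *v z" for M
    by (simp add: commutator_vector_mult)
  show ?thesis
    by (simp add: moment_bracket_def vec.add vec.scale swap commutator_moment[OF _ X]
        linear_Re linear_Im vec_eq_iff algebra_simps)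
qed

text \<open>Every element of G acts as a derivation of the bracket, and the bracket with x, y is the
  action of D(x,y).\<close>
lemma moment_bracket_fundamental_identity:
  "moment_bracket x y (moment_bracket v w z) = moment_bracket (moment_bracket x y v) w z
    - moment_bracket v (moment_bracket y x w) z + moment_bracket v w (moment_bracket x y z)"
proof -
  let ?A = "moment Re x y" and ?C = "moment Im x y"
  have A: "?A \<in> G" and C: "?C \<in> G"
    by (simp_all add: moment_mem linear_Re linear_Im)
  have L: "moment_bracket x y (moment_bracket v w z)
      = (moment_bracket v w (?A *v z) + moment_bracket (?A *v v) w z + moment_bracket v (?A *v w) z)
        + \<i> *s (moment_bracket v w (?C *v z) + moment_bracket (?C *v v) w z
          + moment_bracket v (?C *v w) z)"
    by (simp only: moment_bracket_def[of x y] moment_bracket_derivation[OF A]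
        moment_bracket_derivation[OF C])
  have "moment_bracket y x w = \<i> *s (?C *v w) - ?A *v w"
    by (simp add: moment_bracket_def moment_Re_swap[of y x] moment_Im_swap[of y x]
        neg_matrix_vector_mult)
  then have R2: "moment_bracket v (moment_bracket y x w) z
      = - \<i> *s moment_bracket v (?C *v w) z - moment_bracket v (?A *v w) z"
    using moment_bracket_add_middle[of v "\<i> *s (?C *v w)" "- (?A *v w)" z]
      moment_bracket_scale_middle[of v _ _ z] moment_bracket_scale_middle[of v "-1" "?A *v w" z]
    by simp
  have R1: "moment_bracket (moment_bracket x y v) w z
      = moment_bracket (?A *v v) w z + \<i> *s moment_bracket (?C *v v) w z"
    by (simp add: moment_bracket_def[of x y v] moment_bracket_add_left moment_bracket_scale_left)
  have R3: "moment_bracket v w (moment_bracket x y z)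
      = moment_bracket v w (?A *v z) + \<i> *s moment_bracket v w (?C *v z)"
    by (simp add: moment_bracket_def[of x y z] moment_bracket_add_right moment_bracket_scale_right)
  show ?thesis
    unfolding L R1 R2 R3 by (simp add: vec_eq_iff algebra_simps)
qed

lemma unitary_leibniz_moment_bracket: "unitary_leibniz h moment_bracket"
  by (unfold_locales; (rule moment_bracket_add_left moment_bracket_scale_left moment_bracket_add_middle
        moment_bracket_scale_middle moment_bracket_add_right moment_bracket_scale_right
        moment_bracket_unitarity moment_bracket_symmetry moment_bracket_fundamental_identity)?)

end

section \<open>Isomorphisms\<close>

locale lie_pair_isometry = a: lie_pair h G Bf + b: lie_pair h' G' Bf'
  for h :: "'n::finite cvec \<Rightarrow> 'n cvec \<Rightarrow> complex" and G Bf
    and h' :: "'n cvec \<Rightarrow> 'n cvec \<Rightarrow> complex" and G' Bf' +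
  fixes P :: "'n cmat"
  assumes invertible: "invertible P"
    and isometry: "h' (P *v u) (P *v v) = h u v"
begin

abbreviation transport :: "'n cmat \<Rightarrow> 'n cmat" where
  "transport X \<equiv> P ** X ** matrix_inv P"

definition transports_moments :: bool where
  "transports_moments \<longleftrightarrow>
    (\<forall>f u v. (f = Re \<or> f = Im) \<longrightarrow> b.moment f (P *v u) (P *v v) = transport (a.moment f u v))"

lemma transport_vector_mult: "transport X *v (P *v w) = P *v (X *v w)"
  by (rule conjugate_matrix_vector_mult[OF invertible])

lemma vector_mult_matrix_inv: "P *v (matrix_inv P *v w) = w"
  by (rule matrix_inv_vector_mult_cancel[OF invertible])

lemma skew_wrt_transport: "skew_wrt h X \<Longrightarrow> skew_wrt h' (transport X)"
  unfolding skew_wrt_def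
  by (metis vector_mult_matrix_inv transport_vector_mult isometry)

lemma pair_iso_imp_transports_moments:
  assumes "pair_iso P h G Bf h' G' Bf'"
  shows transports_moments
proof -
  have G': "G' = transport ` G"
    and Bf': "\<And>X Y. X \<in> G \<Longrightarrow> Y \<in> G \<Longrightarrow> Bf' (transport X) (transport Y) = Bf X Y"
    using assms unfolding pair_iso_def by auto
  have "b.moment f (P *v u) (P *v v) = transport (a.moment f u v)" if f: "linear f" for f u v
  proof (rule b.moment_eqI)
    show "transport (a.moment f u v) \<in> G'"
      using G' a.moment_mem[OF f] by blast
    fix X' assume "X' \<in> G'"
    then obtain X where "X \<in> G" "X' = transport X"
      using G' by blast
    then show "Bf' (transport (a.moment f u v)) X' = f (h' (X' *v (P *v u)) (P *v v))"
      by (simp add: Bf' a.moment_mem a.moment_form f transport_vector_mult isometry)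
  qed
  then show ?thesis
    unfolding transports_moments_def using linear_Re_Im by blast
qed

context
  assumes transports: transports_moments
begin

lemma moment_transport:
  "f = Re \<or> f = Im \<Longrightarrow> b.moment f (P *v u) (P *v v) = transport (a.moment f u v)"
  using transports unfolding transports_moments_def by blast

lemma transport_moments: "transport ` a.moments = b.moments"
proof
  show "transport ` a.moments \<subseteq> b.moments"
  proof
    fix M assume "M \<in> transport ` a.moments"
    then obtain f u v where f: "f = Re \<or> f = Im" and M: "M = transport (a.moment f u v)"
      unfolding a.moments_def by blast
    then have "M = b.moment f (P *v u) (P *v v)"
      using moment_transport[OF f] by simp
    then show "M \<in> b.moments"
      unfolding b.moments_def using f by blast
  qed
  show "b.moments \<subseteq> transport ` a.moments"
  proof
    fix M assume "M \<in> b.moments"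
    then obtain f u v where f: "f = Re \<or> f = Im" and M: "M = b.moment f u v"
      unfolding b.moments_def by blast
    then have "M = transport (a.moment f (matrix_inv P *v u) (matrix_inv P *v v))"
      using moment_transport[OF f, of "matrix_inv P *v u" "matrix_inv P *v v"]
      by (simp add: vector_mult_matrix_inv)
    then show "M \<in> transport ` a.moments"
      unfolding a.moments_def using f by blast
  qed
qed

lemma image_transport: "G' = transport ` G"
proof -
  have "G' = span (transport ` a.moments)"
    by (simp add: transport_moments b.span_moments)
  also have "\<dots> = transport ` G"
    by (simp add: span_linear_image[OF linear_matrix_sandwich] a.span_moments)
  finally show ?thesis .
qed

lemma form_transport:
  assumes X: "X \<in> G" and Y: "Y \<in> G"
  shows "Bf' (transport X) (transport Y) = Bf X Y"
proof -
  have transport_mem: "Z \<in> G \<Longrightarrow> transport Z \<in> G'" for Z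
    using image_transport by blast
  have eq: "Bf X Z = Bf' (transport X) (transport Z)" if "Z \<in> a.moments" for Z
  proof -
    obtain f u v where f: "f = Re \<or> f = Im" and Z: "Z = a.moment f u v"
      using \<open>Z \<in> a.moments\<close> unfolding a.moments_def by blast
    have "Bf' (transport X) (transport Z) = Bf' (b.moment f (P *v u) (P *v v)) (transport X)"
      using b.form_sym[OF transport_mem[OF X] transport_mem[OF a.moment_mem[OF linear_Re_Im[OF f]]]]
      by (simp add: Z moment_transport[OF f])
    also have "\<dots> = Bf X Z"
      using a.form_sym[OF X] a.moment_mem[OF linear_Re_Im[OF f]]
      by (simp add: Z X transport_mem b.moment_form a.moment_form linear_Re_Im[OF f]
          transport_vector_mult isometry)
    finally show ?thesis by simp
  qed
  have add: "Bf' (transport X) (transport (Z + Z')) = Bf' (transport X) (transport Z)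
      + Bf' (transport X) (transport Z')" if "Z \<in> G" "Z' \<in> G" for Z Z'
    using b.form_add_right[OF transport_mem[OF X] transport_mem[OF \<open>Z \<in> G\<close>]
        transport_mem[OF \<open>Z' \<in> G\<close>]]
    by (simp add: linear_add[OF linear_matrix_sandwich])
  have scale: "Bf' (transport X) (transport (r *\<^sub>R Z)) = r * Bf' (transport X) (transport Z)"
    if "Z \<in> G" for r Z
    using b.form_scale_right[OF transport_mem[OF X] transport_mem[OF \<open>Z \<in> G\<close>]]
    by (simp add: linear_scale[OF linear_matrix_sandwich])
  have "a.moments \<subseteq> G" and "Y \<in> span a.moments"
    using a.span_moments Y span_superset by auto
  then show ?thesis
    using a.form_eq_on_span[OF _ X eq add scale] by simp
qed

end

lemma pair_iso_iff_transports_moments: "pair_iso P h G Bf h' G' Bf' \<longleftrightarrow> transports_moments"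
proof
  assume transports_moments
  then show "pair_iso P h G Bf h' G' Bf'"
    unfolding pair_iso_def using invertible isometry image_transport form_transport by blast
qed (rule pair_iso_imp_transports_moments)

lemma leibniz_iso_iff_transports_moments:
  "leibniz_iso P h a.moment_bracket h' b.moment_bracket \<longleftrightarrow> transports_moments"
proof
  assume transports_moments
  then have "P *v a.moment_bracket u v w = b.moment_bracket (P *v u) (P *v v) (P *v w)" for u v w
    by (simp add: a.moment_bracket_def b.moment_bracket_def moment_transport transport_vector_mult
        vec.add vec.scale)
  then show "leibniz_iso P h a.moment_bracket h' b.moment_bracket"
    unfolding leibniz_iso_def using invertible isometry by blast
next
  assume "leibniz_iso P h a.moment_bracket h' b.moment_bracket"
  then have bracket: "P *v a.moment_bracket u v w = b.moment_bracket (P *v u) (P *v v) (P *v w)"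
    for u v w
    unfolding leibniz_iso_def by blast
  have "b.moment f (P *v u) (P *v v) = transport (a.moment f u v)" if f: "f = Re \<or> f = Im" for f u v
  proof -
    define D where "D f = b.moment f (P *v u) (P *v v) - transport (a.moment f u v)" for f
    have skew_D: "skew_wrt h' (D f)" if "f = Re \<or> f = Im" for f
      unfolding D_def using linear_Re_Im[OF that]
      by (intro b.skew_wrt_diff b.skew b.moment_mem skew_wrt_transport a.skew a.moment_mem)
    have "D Re *v w + \<i> *s (D Im *v w) = 0" for w
    proof -
      have "b.moment_bracket (P *v u) (P *v v) w = P *v a.moment_bracket u v (matrix_inv P *v w)"
        using bracket[of u v "matrix_inv P *v w"] by (simp add: vector_mult_matrix_inv)
      also have "\<dots> = transport (a.moment Re u v) *v w + \<i> *s (transport (a.moment Im u v) *v w)"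
        using transport_vector_mult[of "a.moment f u v" "matrix_inv P *v w" for f]
        by (simp add: a.moment_bracket_def vec.add vec.scale vector_mult_matrix_inv)
      finally show ?thesis
        by (simp add: D_def b.moment_bracket_def vec_eq_iff algebra_simps)
    qed
    then have "D Re = 0 \<and> D Im = 0"
      using b.skew_wrt_complex_combination_eq_0 skew_D by blast
    then show ?thesis
      using f unfolding D_def by auto
  qed
  then show transports_moments
    unfolding transports_moments_def by blast
qed

end

lemma pair_iso_iff_leibniz_iso:
  assumes "lie_pair h G Bf" and "lie_pair h' G' Bf'"
  shows "pair_iso P h G Bf h' G' Bf' \<longleftrightarrow>
    leibniz_iso P h (lie_pair.moment_bracket h G Bf) h' (lie_pair.moment_bracket h' G' Bf')"
proof -
  have "pair_iso P h G Bf h' G' Bf' \<longleftrightarrow>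
      leibniz_iso P h (lie_pair.moment_bracket h G Bf) h' (lie_pair.moment_bracket h' G' Bf')"
    if "invertible P" and "\<And>u v. h' (P *v u) (P *v v) = h u v"
  proof -
    interpret lie_pair_isometry h G Bf h' G' Bf' P
      using assms that by (simp add: lie_pair_isometry_def lie_pair_isometry_axioms_def)
    show ?thesis
      using pair_iso_iff_transports_moments leibniz_iso_iff_transports_moments by simp
  qed
  then show ?thesis
    unfolding pair_iso_def leibniz_iso_def by blast
qed

section \<open>The metric Lie pair of a unitary 3-Leibniz algebra\<close>

context unitary_leibniz
begin

lemma br_neg_left: "br (- x) y z = - br x y z"
  using br_scale_left[of "-1" x y z] by simp

lemma br_neg_middle: "br x (- y) z = - br x y z"
  using br_scale_middle[where c = "-1"] by simp

lemma br_neg_right: "br x y (- z) = - br x y z"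
  using br_scale_right[where c = "-1"] by simp

lemma br_diff_left: "br (x - x') y z = br x y z - br x' y z"
  using br_add_left[of x "- x'" y z] by (simp add: br_neg_left)

lemma br_diff_middle: "br x (y - y') z = br x y z - br x y' z"
  using br_add_middle[of x y "- y'" z] by (simp add: br_neg_middle)

lemma br_diff_right: "br x y (z - z') = br x y z - br x y z'"
  using br_add_right[of x y z "- z'"] by (simp add: br_neg_right)

text \<open>By unitarity the adjoint of br x y is br y x, so this is the skew-adjoint part of br x y,
  i.e. the real part of D(x,y) in u(V).\<close>
definition skew_der :: "'n cvec \<Rightarrow> 'n cvec \<Rightarrow> 'n cmat" where
  "skew_der x y = matrix (\<lambda>z. (1/2 :: complex) *s (br x y z - br y x z))"

lemma skew_der_vector_mult: "skew_der x y *v z = (1/2 :: complex) *s (br x y z - br y x z)"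
  unfolding skew_der_def
  by (rule matrix_works)
    (simp add: Vector_Spaces.linear_iff vec.vector_space_axioms br_add_right br_scale_right
      vec_eq_iff algebra_simps)

lemma skew_der_add_left: "skew_der (x + x') y = skew_der x y + skew_der x' y"
  by (simp add: matrix_eq skew_der_vector_mult br_add_left br_add_middle vec_eq_iff algebra_simps)

lemma skew_der_add_right: "skew_der x (y + y') = skew_der x y + skew_der x y'"
  by (simp add: matrix_eq skew_der_vector_mult br_add_left br_add_middle vec_eq_iff algebra_simps)

lemma skew_der_scaleR_left: "skew_der (of_real r *s x) y = r *\<^sub>R skew_der x y"
  by (simp add: matrix_eq skew_der_vector_mult scaleR_matrix_vector_mult br_scale_left
      br_scale_middle vec_eq_iff algebra_simps)

lemma skew_der_zero_left [simp]: "skew_der 0 y = 0"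
  using skew_der_add_left[of 0 0 y] by simp

lemma skew_der_zero_right [simp]: "skew_der x 0 = 0"
  using skew_der_add_right[of x 0 0] by simp

lemma skew_wrt_skew_der: "skew_wrt h (skew_der x y)"
proof -
  have "cnj (1/2 :: complex) = 1/2"
    by (simp add: complex_eq_iff)
  then show ?thesis
    unfolding skew_wrt_def
    by (simp add: skew_der_vector_mult herm_simps unitarity[of x y] unitarity[of y x] algebra_simps)
qed

lemma re_herm_skew_der_swap: "Re (h (skew_der v w *v x) y) = Re (h (skew_der x y *v v) w)"
proof -
  have "h (br w v x) y = cnj (h (br y x v) w)"
    using symmetry[of w v x y] unitarity[of x y w v] herm_cnj[of w "br y x v"] by simp
  then show ?thesis
    by (simp add: skew_der_vector_mult herm_scale_left herm_diff_left symmetry[of v w x y])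
qed

text \<open>The fundamental identity says that each br a b is a derivation of the bracket up to the
  twist in the middle argument; antisymmetrising in a, b removes the twist.\<close>
lemma skew_der_derivation:
  "skew_der a b *v br x y z - br x y (skew_der a b *v z)
    = br (skew_der a b *v x) y z + br x (skew_der a b *v y) z"
proof -
  have half: "cnj (1/2 :: complex) = 1/2"
    by (simp add: complex_eq_iff)
  have ab: "br a b (br x y z) - br x y (br a b z) = br (br a b x) y z - br x (br b a y) z"
    and ba: "br b a (br x y z) - br x y (br b a z) = br (br b a x) y z - br x (br a b y) z"
    using fundamental_identity[of a b x y z] fundamental_identity[of b a x y z]
    by (simp_all add: algebra_simps)
  have "skew_der a b *v br x y z - br x y (skew_der a b *v z)
      = (1/2 :: complex) *s ((br a b (br x y z) - br x y (br a b z))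
        - (br b a (br x y z) - br x y (br b a z)))"
    by (simp add: skew_der_vector_mult br_scale_right br_diff_right vec_eq_iff algebra_simps)
  also have "\<dots> = (1/2 :: complex) *s ((br (br a b x) y z - br x (br b a y) z)
        - (br (br b a x) y z - br x (br a b y) z))"
    by (simp only: ab ba)
  also have "\<dots> = br (skew_der a b *v x) y z + br x (skew_der a b *v y) z"
    by (simp add: skew_der_vector_mult br_scale_left br_scale_middle br_diff_left br_diff_middle half
        vec_eq_iff algebra_simps)
  finally show ?thesis .
qed

lemma commutator_skew_der:
  "commutator (skew_der a b) (skew_der x y)
    = skew_der (skew_der a b *v x) y + skew_der x (skew_der a b *v y)"
proof -
  let ?T = "skew_der a b"
  have "commutator ?T (skew_der x y) *v z = (skew_der (?T *v x) y + skew_der x (?T *v y)) *v z" for z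
  proof -
    have "commutator ?T (skew_der x y) *v z = (1/2 :: complex) *s
        ((?T *v br x y z - br x y (?T *v z)) - (?T *v br y x z - br y x (?T *v z)))"
      by (simp add: commutator_vector_mult skew_der_vector_mult vec.scale vec.diff br_scale_right
          br_diff_right vec_eq_iff algebra_simps)
    also have "\<dots> = (1/2 :: complex) *s
        ((br (?T *v x) y z + br x (?T *v y) z) - (br (?T *v y) x z + br y (?T *v x) z))"
      by (simp only: skew_der_derivation)
    also have "\<dots> = (skew_der (?T *v x) y + skew_der x (?T *v y)) *v z"
      by (simp add: skew_der_vector_mult vec_eq_iff algebra_simps)
    finally show ?thesis .
  qed
  then show ?thesis
    by (simp add: matrix_eq)
qed

definition der_sum :: "('n cvec \<times> 'n cvec) list \<Rightarrow> 'n cmat" where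
  "der_sum ps = sum_list (map (\<lambda>(x, y). skew_der x y) ps)"

definition der_pairing :: "('n cvec \<times> 'n cvec) list \<Rightarrow> 'n cmat \<Rightarrow> real" where
  "der_pairing qs M = sum_list (map (\<lambda>(v, w). Re (h (M *v v) w)) qs)"

lemma der_sum_Nil [simp]: "der_sum [] = 0"
  and der_sum_Cons [simp]: "der_sum ((x, y) # ps) = skew_der x y + der_sum ps"
  and der_sum_append: "der_sum (ps @ qs) = der_sum ps + der_sum qs"
  by (simp_all add: der_sum_def)

lemma der_pairing_Nil [simp]: "der_pairing [] M = 0"
  and der_pairing_Cons [simp]: "der_pairing ((v, w) # qs) M = Re (h (M *v v) w) + der_pairing qs M"
  by (simp_all add: der_pairing_def)

lemma der_pairing_add: "der_pairing qs (M + N) = der_pairing qs M + der_pairing qs N"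
  by (induction qs) (auto simp: herm_add_left matrix_vector_mult_add_rdistrib)

lemma der_pairing_scaleR: "der_pairing qs (r *\<^sub>R M) = r * der_pairing qs M"
  by (induction qs) (auto simp: scaleR_matrix_vector_mult herm_scale_left algebra_simps)

lemma der_pairing_zero [simp]: "der_pairing qs 0 = 0"
  by (induction qs) auto

lemma der_pairing_skew_der: "der_pairing qs (skew_der x y) = Re (h (der_sum qs *v x) y)"
  by (induction qs) (auto simp: herm_add_left matrix_vector_mult_add_rdistrib re_herm_skew_der_swap)

lemma der_pairing_der_sum_swap: "der_pairing qs (der_sum ps) = der_pairing ps (der_sum qs)"
  by (induction ps) (auto simp: der_pairing_add der_pairing_skew_der)

lemma der_sum_scaleR: "der_sum (map (\<lambda>(x, y). (of_real r *s x, y)) ps) = r *\<^sub>R der_sum ps"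
  by (induction ps) (auto simp: skew_der_scaleR_left scaleR_add_right)

lemma skew_wrt_der_sum: "skew_wrt h (der_sum ps)"
proof (induction ps)
  case (Cons p ps)
  then show ?case
    using skew_wrt_skew_der[of "fst p" "snd p"]
    by (cases p) (simp add: skew_wrt_def herm_add_left herm_add_right vec.add algebra_simps)
qed (simp add: skew_wrt_def)

lemma commutator_der_sum_skew_der:
  "commutator (der_sum ps) (skew_der x y) = skew_der (der_sum ps *v x) y + skew_der x (der_sum ps *v y)"
proof (induction ps)
  case (Cons p ps)
  then show ?case
    by (cases p) (simp add: commutator_add_left commutator_skew_der skew_der_add_left
        skew_der_add_right matrix_vector_mult_add_rdistrib)
qed simp

definition der_action :: "'n cmat \<Rightarrow> ('n cvec \<times> 'n cvec) list \<Rightarrow> ('n cvec \<times> 'n cvec) list" where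
  "der_action X qs = concat (map (\<lambda>(v, w). [(X *v v, w), (v, X *v w)]) qs)"

lemma der_action_Nil [simp]: "der_action X [] = []"
  and der_action_Cons [simp]: "der_action X ((v, w) # qs) = (X *v v, w) # (v, X *v w) # der_action X qs"
  by (simp_all add: der_action_def)

lemma commutator_der_sum: "commutator (der_sum ps) (der_sum qs) = der_sum (der_action (der_sum ps) qs)"
proof (induction qs)
  case (Cons q qs)
  then show ?case
    by (cases q) (simp add: commutator_add_right commutator_der_sum_skew_der)
qed simp

lemma der_pairing_commutator:
  "der_pairing qs (commutator (der_sum ps) Y) = - der_pairing (der_action (der_sum ps) qs) Y"
proof (induction qs)
  case (Cons q qs)
  then show ?case
    using skew_wrtD[OF skew_wrt_der_sum, of ps "Y *v fst q" "snd q"]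
    by (cases q) (simp add: commutator_vector_mult herm_diff_left)
qed simp

definition der_algebra :: "'n cmat set" where
  "der_algebra = range der_sum"

text \<open>The pairing of X with der_sum qs does not depend on the choice of qs, by
  der_pairing_der_sum_swap.\<close>
definition der_form :: "'n cmat \<Rightarrow> 'n cmat \<Rightarrow> real" where
  "der_form X Y = der_pairing (SOME qs. Y = der_sum qs) X"

lemma der_form_der_sum: "X \<in> der_algebra \<Longrightarrow> der_form X (der_sum qs) = der_pairing qs X"
proof -
  assume "X \<in> der_algebra"
  then obtain ps where X: "X = der_sum ps"
    unfolding der_algebra_def by blast
  define qs' where "qs' = (SOME qs'. der_sum qs = der_sum qs')"
  have "der_sum qs = der_sum qs'"
    unfolding qs'_def by (rule someI[of _ qs]) (rule refl)
  then show ?thesis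
    unfolding der_form_def qs'_def[symmetric] X by (metis der_pairing_der_sum_swap)
qed

lemma der_sum_mem [simp]: "der_sum ps \<in> der_algebra"
  by (simp add: der_algebra_def)

lemma skew_der_mem [simp]: "skew_der x y \<in> der_algebra"
  using der_sum_mem[of "[(x, y)]"] by simp

lemma der_algebra_cases:
  assumes "X \<in> der_algebra"
  obtains ps where "X = der_sum ps"
  using assms unfolding der_algebra_def by blast

lemma der_form_sym: "X \<in> der_algebra \<Longrightarrow> Y \<in> der_algebra \<Longrightarrow> der_form X Y = der_form Y X"
  by (metis der_algebra_cases der_form_der_sum der_pairing_der_sum_swap)

lemma der_form_skew_der: "X \<in> der_algebra \<Longrightarrow> der_form (skew_der x y) X = Re (h (X *v x) y)"
  using der_form_sym[of X "skew_der x y"] der_form_der_sum[of X "[(x, y)]"] by simp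

lemma der_form_nondegenerate:
  assumes X: "X \<in> der_algebra" and orth: "\<forall>Y\<in>der_algebra. der_form X Y = 0"
  shows "X = 0"
proof -
  have re: "Re (h (X *v x) y) = 0" for x y
    using orth der_form_sym[OF X] der_form_skew_der[OF X] by (metis skew_der_mem)
  have "h (X *v x) y = 0" for x y
    using re[of x y] re[of "\<i> *s x" y] by (simp add: vec.scale herm_scale_left complex_eq_iff)
  then show "X = 0"
    by (rule matrix_eq_0_if_herm_eq_0)
qed

lemma der_form_invariant:
  assumes "X \<in> der_algebra" and "Y \<in> der_algebra" and "Z \<in> der_algebra"
  shows "der_form (commutator X Y) Z = - der_form Y (commutator X Z)"
proof -
  obtain ps rs qs where X: "X = der_sum ps" and Y: "Y = der_sum rs" and Z: "Z = der_sum qs"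
    using assms der_algebra_cases by metis
  have "der_form (commutator X Y) Z = der_pairing qs (commutator X Y)"
    unfolding X Y Z by (simp add: der_form_der_sum commutator_der_sum)
  also have "\<dots> = - der_pairing (der_action X qs) Y"
    unfolding X by (rule der_pairing_commutator)
  also have "\<dots> = - der_form Y (commutator X Z)"
    by (simp add: X Z assms(2) der_form_der_sum commutator_der_sum)
  finally show ?thesis .
qed

lemma metric_lie_pair_der_algebra: "metric_lie_pair h der_algebra der_form"
proof -
  have "der_sum ps + der_sum qs \<in> der_algebra" and "r *\<^sub>R der_sum ps \<in> der_algebra"
    and "commutator (der_sum ps) (der_sum qs) \<in> der_algebra" for ps qs and r :: real
    using der_sum_mem[of "ps @ qs"] der_sum_mem[of "map (\<lambda>(x, y). (of_real r *s x, y)) ps"]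
    by (simp_all only: der_sum_append der_sum_scaleR commutator_der_sum der_sum_mem)
  then show ?thesis
    unfolding metric_lie_pair_def herm_form_iff_hermitian_form
    using hermitian_form_axioms skew_wrt_der_sum der_form_sym der_form_nondegenerate
      der_form_invariant der_sum_mem[of "[]"]
    by (auto elim!: der_algebra_cases simp: der_form_def der_pairing_add der_pairing_scaleR)
qed

lemma induced_bracket_der_algebra: "induced_bracket h der_algebra der_form br"
  unfolding induced_bracket_def
proof (intro allI)
  fix x y
  have "der_form (skew_der (- \<i> *s x) y) X = Im (h (X *v x) y)" if "X \<in> der_algebra" for X
    using that by (simp add: der_form_skew_der vec.neg vec.scale herm_minus_left herm_scale_left)
  moreover have "br x y z = skew_der x y *v z + \<i> *s (skew_der (- \<i> *s x) y *v z)" for z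
    by (simp add: skew_der_vector_mult br_neg_left br_neg_middle br_scale_left br_scale_middle
        vec_eq_iff algebra_simps)
  ultimately show "\<exists>A\<in>der_algebra. \<exists>C\<in>der_algebra.
      (\<forall>X\<in>der_algebra. der_form A X = Re (h (X *v x) y) \<and> der_form C X = Im (h (X *v x) y)) \<and>
      (\<forall>z. br x y z = A *v z + \<i> *s (C *v z))"
    using der_form_skew_der skew_der_mem by blast
qed

end

theorem mainTheorem6:
  shows "(\<forall>(h::'n::finite cvec \<Rightarrow> 'n cvec \<Rightarrow> complex) G Bf. metric_lie_pair h G Bf \<longrightarrow>
            (\<exists>br. induced_bracket h G Bf br) \<and>
            (\<forall>br. induced_bracket h G Bf br \<longrightarrow> unitary_3leibniz h br))
   \<and> (\<forall>(h::'n cvec \<Rightarrow> 'n cvec \<Rightarrow> complex) G Bf br h' G' Bf' br'.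
        metric_lie_pair h G Bf \<and> metric_lie_pair h' G' Bf' \<and>
        induced_bracket h G Bf br \<and> induced_bracket h' G' Bf' br' \<longrightarrow>
        ((\<exists>P. pair_iso P h G Bf h' G' Bf') \<longleftrightarrow> (\<exists>P. leibniz_iso P h br h' br')))
   \<and> (\<forall>(h::'n cvec \<Rightarrow> 'n cvec \<Rightarrow> complex) br. unitary_3leibniz h br \<longrightarrow>
        (\<exists>G Bf. metric_lie_pair h G Bf \<and> induced_bracket h G Bf br))"
proof (intro conjI allI impI)
  fix h :: "'n::finite cvec \<Rightarrow> 'n cvec \<Rightarrow> complex" and G Bf
  assume "metric_lie_pair h G Bf"
  then interpret lie_pair h G Bf
    by (rule lie_pair.intro)
  show "\<exists>br. induced_bracket h G Bf br"
    using induced_bracket_iff by blast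
  show "unitary_3leibniz h br" if "induced_bracket h G Bf br" for br
    using that induced_bracket_iff unitary_leibniz_moment_bracket
    by (simp add: unitary_3leibniz_iff_unitary_leibniz)
next
  fix h h' :: "'n::finite cvec \<Rightarrow> 'n cvec \<Rightarrow> complex" and G Bf br G' Bf' br'
  assume "metric_lie_pair h G Bf \<and> metric_lie_pair h' G' Bf' \<and>
    induced_bracket h G Bf br \<and> induced_bracket h' G' Bf' br'"
  then have pairs: "lie_pair h G Bf" "lie_pair h' G' Bf'"
    and "br = lie_pair.moment_bracket h G Bf" and "br' = lie_pair.moment_bracket h' G' Bf'"
    using lie_pair.intro lie_pair.induced_bracket_iff by blast+
  then show "(\<exists>P. pair_iso P h G Bf h' G' Bf') \<longleftrightarrow> (\<exists>P. leibniz_iso P h br h' br')"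
    using pair_iso_iff_leibniz_iso[OF pairs] by simp
next
  fix h :: "'n::finite cvec \<Rightarrow> 'n cvec \<Rightarrow> complex" and br
  assume "unitary_3leibniz h br"
  then interpret unitary_leibniz h br
    by (simp add: unitary_3leibniz_iff_unitary_leibniz)
  show "\<exists>G Bf. metric_lie_pair h G Bf \<and> induced_bracket h G Bf br"
    using metric_lie_pair_der_algebra induced_bracket_der_algebra by blast
qed

end
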